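(* Let $X$ be a finite discrete space with at least two elements, $\Gamma$ a nonempty countable set, $\varphi:\Gamma\to\Gamma$ any map. Then $(X^\Gamma,\sigma_\varphi)$ is transitive distributional chaotic if and only if $\varphi$ is one-to-one and has no periodic point.
   Context: $X^\Gamma$ has the product topology and a fixed compatible metric $d$; $\sigma_\varphi((x_\alpha)_{\alpha\in\Gamma})=(x_{\varphi(\alpha)})_{\alpha\in\Gamma}$. For $f=\sigma_\varphi$, $x,y\in X^\Gamma$, $t>0$: $\xi(x,y,t,n)=\#\{i\in\{0,\dots,n-1\}:d(f^i(x),f^i(y))<t\}$, $F_{xy}(t)=\liminf_n \xi(x,y,t,n)/n$, $F^*_{xy}(t)=\limsup_n\xi(x,y,t,n)/n$. A point $x$ is a transitive point if $\{f^n(x):n\ge0\}$ is dense. The system is transitive distributional chaotic if there exist a dense uncountable set $A\subseteq X^\Gamma$ consisting of transitive points and $\varepsilon>0$ such that for all distinct $x,y\in A$: $F^*_{xy}(s)=1$ for every $s>0$ and $F_{xy}(\varepsilon)=0$. *)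

theory Defs
  imports "HOL-Analysis.Analysis"
begin

definition prod_discrete :: "('g \<Rightarrow> 'a) topology" where
  "prod_discrete = product_topology (\<lambda>_. discrete_topology (UNIV :: 'a set)) UNIV"

definition sigma_shift :: "('g \<Rightarrow> 'g) \<Rightarrow> ('g \<Rightarrow> 'a) \<Rightarrow> ('g \<Rightarrow> 'a)" where
  "sigma_shift \<phi> x = (\<lambda>\<alpha>. x (\<phi> \<alpha>))"

definition xi_count :: "('b \<Rightarrow> 'b \<Rightarrow> real) \<Rightarrow> ('b \<Rightarrow> 'b) \<Rightarrow> 'b \<Rightarrow> 'b \<Rightarrow> real \<Rightarrow> nat \<Rightarrow> nat" where
  "xi_count d f x y t n = card {i. i < n \<and> d ((f ^^ i) x) ((f ^^ i) y) < t}"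

definition F_lower :: "('b \<Rightarrow> 'b \<Rightarrow> real) \<Rightarrow> ('b \<Rightarrow> 'b) \<Rightarrow> 'b \<Rightarrow> 'b \<Rightarrow> real \<Rightarrow> ereal" where
  "F_lower d f x y t = liminf (\<lambda>n. ereal (real (xi_count d f x y t n) / real n))"

definition F_upper :: "('b \<Rightarrow> 'b \<Rightarrow> real) \<Rightarrow> ('b \<Rightarrow> 'b) \<Rightarrow> 'b \<Rightarrow> 'b \<Rightarrow> real \<Rightarrow> ereal" where
  "F_upper d f x y t = limsup (\<lambda>n. ereal (real (xi_count d f x y t n) / real n))"

definition transitive_point :: "'b topology \<Rightarrow> ('b \<Rightarrow> 'b) \<Rightarrow> 'b \<Rightarrow> bool" where
  "transitive_point T f x \<longleftrightarrow> T closure_of {(f ^^ n) x | n. True} = topspace T"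

definition transitive_distributional_chaotic ::
  "'b topology \<Rightarrow> ('b \<Rightarrow> 'b \<Rightarrow> real) \<Rightarrow> ('b \<Rightarrow> 'b) \<Rightarrow> bool" where
  "transitive_distributional_chaotic T d f \<longleftrightarrow>
     (\<exists>A \<epsilon>. A \<subseteq> topspace T \<and> T closure_of A = topspace T \<and> uncountable A
        \<and> (\<forall>x\<in>A. transitive_point T f x) \<and> \<epsilon> > 0
        \<and> (\<forall>x\<in>A. \<forall>y\<in>A. x \<noteq> y \<longrightarrow>
              (\<forall>s>0. F_upper d f x y s = 1) \<and> F_lower d f x y \<epsilon> = 0))"

definition has_periodic_point :: "('g \<Rightarrow> 'g) \<Rightarrow> bool" where
  "has_periodic_point \<phi> \<longleftrightarrow> (\<exists>\<alpha> n. n > 0 \<and> (\<phi> ^^ n) \<alpha> = \<alpha>)"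

end

theory Submission
  imports Defs
begin

text \<open>
  Necessity only needs one transitive point x. If \<open>\<phi> \<alpha> = \<phi> \<beta>\<close> with \<open>\<alpha> \<noteq> \<beta>\<close>, the shifted
  points \<open>x \<circ> \<phi>\<^sup>n\<close> with \<open>n > 0\<close> agree at \<open>\<alpha>\<close> and \<open>\<beta>\<close>, so x cannot realise two different
  patterns on \<open>{\<alpha>, \<beta>}\<close>; if \<open>\<alpha>\<close> is periodic, some \<open>x \<circ> \<phi>\<^sup>n\<close> is constant on the finite orbit
  of \<open>\<alpha>\<close>, and then so are all later ones.

  As \<open>\<phi>\<close> is injective without periodic points, for every
  finite set S there is a delay D such that \<open>\<phi>\<^sup>i \<delta> \<noteq> \<phi>\<^sup>j \<delta>'\<close> for \<open>\<delta>, \<delta>' \<in> S\<close>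
  whenever \<open>i + D < j\<close>. Time is cut into blocks of rapidly growing length. In block m
  the orbit of the first m coordinates first shows the m-th finite pattern, which makes every
  constructed point transitive, and then, for all but a fraction \<open>1/(m + 2)\<close> of the block,
  a constant symbol selected by one bit of a parameter.
  In even blocks this symbol is always a, which gives \<open>F\<^sup>* = 1\<close>; two distinct parameters
  differ in some odd block, where one point shows a and the other b, which gives \<open>F = 0\<close> at a
  third of the distance between the two constant points. Arbitrary prefixes on the first
  coordinates make the family dense, and the parameters make it uncountable.
\<close>

section \<open>Cylinders and iterates of the shift\<close>

lemma funpow_funpow_apply: "(f ^^ m) ((f ^^ n) x) = (f ^^ (m + n)) x"
  by (simp add: funpow_add)

lemma funpow_sigma_shift: "(sigma_shift \<phi> ^^ n) x = (\<lambda>\<gamma>. x ((\<phi> ^^ n) \<gamma>))"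
  by (induction n) (auto simp: sigma_shift_def funpow_swap1)

definition cylinder :: "'g set \<Rightarrow> ('g \<Rightarrow> 'a) \<Rightarrow> ('g \<Rightarrow> 'a) set" where
  "cylinder S c = {z. \<forall>\<gamma>\<in>S. z \<gamma> = c \<gamma>}"

lemma center_in_cylinder [simp]: "c \<in> cylinder S c"
  by (simp add: cylinder_def)

lemma topspace_prod_discrete [simp]: "topspace prod_discrete = UNIV"
  by (simp add: prod_discrete_def)

lemma openin_cylinder:
  assumes "finite S"
  shows "openin prod_discrete (cylinder S c)"
proof -
  have "cylinder S c = Pi\<^sub>E UNIV (\<lambda>\<gamma>. if \<gamma> \<in> S then {c \<gamma>} else UNIV)"
    by (auto simp: cylinder_def PiE_iff) (metis singletonD)
  moreover have "finite {\<gamma>. (if \<gamma> \<in> S then {c \<gamma>} else UNIV) \<noteq> UNIV}"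
    using assms by (rule rev_finite_subset) auto
  ultimately show ?thesis
    by (simp add: prod_discrete_def openin_PiE_gen)
qed

lemma openin_imp_cylinder_subset:
  assumes "openin prod_discrete U" "c \<in> U"
  obtains S where "finite S" "cylinder S c \<subseteq> U"
proof -
  obtain V where V: "finite {\<gamma>. V \<gamma> \<noteq> UNIV}" "c \<in> Pi\<^sub>E UNIV V" "Pi\<^sub>E UNIV V \<subseteq> U"
    using assms by (auto simp: prod_discrete_def openin_product_topology_alt)
  have sub: "cylinder {\<gamma>. V \<gamma> \<noteq> UNIV} c \<subseteq> Pi\<^sub>E UNIV V"
  proof
    fix z assume "z \<in> cylinder {\<gamma>. V \<gamma> \<noteq> UNIV} c"
    then have "z \<gamma> \<in> V \<gamma>" for \<gamma>
      using V(2) by (cases "V \<gamma> = UNIV") (auto simp: cylinder_def PiE_iff)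
    then show "z \<in> Pi\<^sub>E UNIV V"
      by (simp add: PiE_iff)
  qed
  show thesis
    using sub V(3) by (intro that[OF V(1)]) (rule order_trans)
qed

lemma dense_prod_discrete_iff:
  "prod_discrete closure_of A = topspace prod_discrete \<longleftrightarrow>
     (\<forall>S c. finite S \<longrightarrow> A \<inter> cylinder S c \<noteq> {})"
proof
  assume "prod_discrete closure_of A = topspace prod_discrete"
  then show "\<forall>S c. finite S \<longrightarrow> A \<inter> cylinder S c \<noteq> {}"
    by (metis center_in_cylinder dense_intersects_open empty_iff openin_cylinder)
next
  assume "\<forall>S c. finite S \<longrightarrow> A \<inter> cylinder S c \<noteq> {}"
  then show "prod_discrete closure_of A = topspace prod_discrete"
    unfolding dense_intersects_open
    by (metis all_not_in_conv inf_mono openin_imp_cylinder_subset subset_empty subset_refl)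
qed

lemma transitive_point_sigma_shift_iff:
  "transitive_point prod_discrete (sigma_shift \<phi>) x \<longleftrightarrow>
     (\<forall>S c. finite S \<longrightarrow> (\<exists>n. \<forall>\<gamma>\<in>S. x ((\<phi> ^^ n) \<gamma>) = c \<gamma>))"
  unfolding transitive_point_def dense_prod_discrete_iff
  by (auto simp: cylinder_def funpow_sigma_shift; blast)

lemma transitive_point_sigma_shiftD:
  assumes "transitive_point prod_discrete (sigma_shift \<phi>) x" "finite S"
  obtains n where "\<And>\<gamma>. \<gamma> \<in> S \<Longrightarrow> x ((\<phi> ^^ n) \<gamma>) = c \<gamma>"
  using assms unfolding transitive_point_sigma_shift_iff by blast

lemma cylinder_subset_mball:
  assumes "Metric_space UNIV d" "Metric_space.mtopology UNIV d = prod_discrete" "r > 0"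
  obtains S where "finite S" "\<And>z. z \<in> cylinder S c \<Longrightarrow> d c z < r"
proof -
  interpret Metric_space UNIV d by fact
  have "openin prod_discrete (mball c r)"
    using assms(2) openin_mball by metis
  then obtain S where S: "finite S" "cylinder S c \<subseteq> mball c r"
    using \<open>r > 0\<close> openin_imp_cylinder_subset by (metis centre_in_mball_iff UNIV_I)
  show thesis
  proof (rule that[OF S(1)])
    fix z assume "z \<in> cylinder S c"
    with S(2) show "d c z < r"
      by auto
  qed
qed

lemma (in Metric_space) mdist_lt_via_centre:
  assumes "c \<in> M" "z \<in> M" "w \<in> M" "d c z < e" "d c w < e"
  shows "d z w < 2 * e"
  using triangle[OF assms(2,1,3)] commute[of z c] assms(4,5) by linarith

lemma (in Metric_space) not_close_near_far_centres:
  assumes "c \<in> M" "c' \<in> M" "z \<in> M" "w \<in> M"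
    and "d c z < e" "d c' w < e" "3 * e \<le> d c c'"
  shows "\<not> d z w < e"
  using triangle[of c z w] triangle[of c w c'] commute[of c' w] assms by fastforce

section \<open>Necessity\<close>

lemma transitive_point_sigma_shift_imp_inj:
  fixes x :: "'g \<Rightarrow> 'a" and a b :: 'a
  assumes "transitive_point prod_discrete (sigma_shift \<phi>) x" "a \<noteq> b"
  shows "inj \<phi>"
proof (rule injI, rule ccontr)
  fix \<alpha> \<beta> assume "\<phi> \<alpha> = \<phi> \<beta>" "\<alpha> \<noteq> \<beta>"
  have "x \<alpha> = u" if "u \<noteq> v" for u v
  proof -
    obtain n where "\<And>\<gamma>. \<gamma> \<in> {\<alpha>, \<beta>} \<Longrightarrow> x ((\<phi> ^^ n) \<gamma>) = (if \<gamma> = \<alpha> then u else v)"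
      using transitive_point_sigma_shiftD[OF assms(1), of "{\<alpha>, \<beta>}" "\<lambda>\<gamma>. if \<gamma> = \<alpha> then u else v"]
      by blast
    then have n: "x ((\<phi> ^^ n) \<alpha>) = u" "x ((\<phi> ^^ n) \<beta>) = v"
      using \<open>\<alpha> \<noteq> \<beta>\<close> by auto
    show ?thesis
    proof (cases n)
      case (Suc k)
      then have "(\<phi> ^^ n) \<alpha> = (\<phi> ^^ n) \<beta>"
        using \<open>\<phi> \<alpha> = \<phi> \<beta>\<close> by (simp only: funpow_Suc_right o_apply)
      with n that show ?thesis
        by simp
    qed (use n in simp)
  qed
  from this[of a b] this[of b a] show False
    using \<open>a \<noteq> b\<close> by simp
qed

lemma transitive_point_sigma_shift_imp_aperiodic:
  fixes x :: "'g \<Rightarrow> 'a" and a b :: 'a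
  assumes "transitive_point prod_discrete (sigma_shift \<phi>) x" "a \<noteq> b"
  shows "\<not> has_periodic_point \<phi>"
proof
  assume "has_periodic_point \<phi>"
  then obtain \<alpha> p where "p > 0" and period: "(\<phi> ^^ p) \<alpha> = \<alpha>"
    unfolding has_periodic_point_def by blast
  obtain n where n: "\<And>\<gamma>. \<gamma> \<in> (\<lambda>j. (\<phi> ^^ j) \<alpha>) ` {..<p} \<Longrightarrow> x ((\<phi> ^^ n) \<gamma>) = a"
    using transitive_point_sigma_shiftD[OF assms(1), of "(\<lambda>j. (\<phi> ^^ j) \<alpha>) ` {..<p}" "\<lambda>_. a"]
    by blast
  have eventually_a: "x ((\<phi> ^^ k) \<alpha>) = a" if "n \<le> k" for k
  proof -
    have "(\<phi> ^^ k) \<alpha> = (\<phi> ^^ n) ((\<phi> ^^ (k - n)) \<alpha>)"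
      using that by (simp add: funpow_funpow_apply)
    also have "\<dots> = (\<phi> ^^ n) ((\<phi> ^^ ((k - n) mod p)) \<alpha>)"
      using period by (simp add: funpow_mod_eq)
    finally show ?thesis
      using n \<open>p > 0\<close> by simp
  qed
  obtain m where "x ((\<phi> ^^ m) \<alpha>) = b"
    using transitive_point_sigma_shiftD[OF assms(1), of "{\<alpha>}" "\<lambda>_. b"] by blast
  moreover have "(\<phi> ^^ (m + p * n)) \<alpha> = (\<phi> ^^ m) \<alpha>"
    using funpow_mod_eq[OF period, of "m + p * n"] funpow_mod_eq[OF period, of m] by simp
  moreover have "n \<le> m + p * n"
    using \<open>p > 0\<close> by (cases p) auto
  ultimately show False
    using eventually_a[of "m + p * n"] \<open>a \<noteq> b\<close> by simp
qed

lemma transitive_distributional_chaotic_imp_transitive_point: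
  assumes "transitive_distributional_chaotic T d f"
  shows "\<exists>x. transitive_point T f x"
proof -
  obtain A where A: "uncountable A" "\<forall>x\<in>A. transitive_point T f x"
    using assms unfolding transitive_distributional_chaotic_def by (elim exE conjE) blast
  from \<open>uncountable A\<close> obtain x where "x \<in> A"
    by (metis countable_empty equals0I)
  with A(2) show ?thesis
    by blast
qed

section \<open>Densities of close times along long windows\<close>

lemma limsup_eq_1I:
  fixes r :: "nat \<Rightarrow> real"
  assumes "\<And>n. r n \<le> 1" and "\<And>e. e > 0 \<Longrightarrow> \<exists>\<^sub>F n in sequentially. 1 - e \<le> r n"
  shows "limsup (\<lambda>n. ereal (r n)) = 1"
proof (rule antisym)
  show "limsup (\<lambda>n. ereal (r n)) \<le> 1"
    by (rule Limsup_bounded, rule always_eventually) (simp add: assms(1))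
  show "1 \<le> limsup (\<lambda>n. ereal (r n))"
  proof (rule ccontr)
    assume "\<not> 1 \<le> limsup (\<lambda>n. ereal (r n))"
    then have "limsup (\<lambda>n. ereal (r n)) < 1"
      by (simp add: not_le)
    then obtain y where y: "limsup (\<lambda>n. ereal (r n)) < ereal y" "ereal y < 1"
      using ereal_dense2 by blast
    obtain N where "\<forall>n\<ge>N. r n < y"
      using Limsup_lessD[OF y(1)] by (auto simp: eventually_sequentially)
    moreover obtain n where "n \<ge> N" "1 - (1 - y) \<le> r n"
      using assms(2)[of "1 - y"] y(2) by (auto simp: frequently_sequentially)
    ultimately show False
      by auto
  qed
qed

lemma liminf_eq_0I:
  fixes r :: "nat \<Rightarrow> real"
  assumes "\<And>n. 0 \<le> r n" and "\<And>e. e > 0 \<Longrightarrow> \<exists>\<^sub>F n in sequentially. r n \<le> e"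
  shows "liminf (\<lambda>n. ereal (r n)) = 0"
proof (rule antisym)
  show "0 \<le> liminf (\<lambda>n. ereal (r n))"
    by (rule Liminf_bounded, rule always_eventually) (simp add: assms(1))
  show "liminf (\<lambda>n. ereal (r n)) \<le> 0"
  proof (rule ccontr)
    assume "\<not> liminf (\<lambda>n. ereal (r n)) \<le> 0"
    then have "0 < liminf (\<lambda>n. ereal (r n))"
      by (simp add: not_le)
    then obtain y where y: "0 < ereal y" "ereal y < liminf (\<lambda>n. ereal (r n))"
      using ereal_dense2 by blast
    obtain N where "\<forall>n\<ge>N. y < r n"
      using less_LiminfD[OF y(2)] by (auto simp: eventually_sequentially)
    moreover obtain n where "n \<ge> N" "r n \<le> y"
      using assms(2)[of y] y(1) by (auto simp: frequently_sequentially)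
    ultimately show False
      by auto
  qed
qed

lemma xi_count_le: "xi_count d f x y t n \<le> n"
  unfolding xi_count_def by (rule card_mono[of "{..<n}", simplified]) auto

lemma window_head_le:
  assumes "k * l \<le> n" "0 < k" "inverse (real k) < e"
  shows "real l \<le> e * real n"
proof -
  have "real l \<le> inverse (real k) * real n"
    using assms(1,2) by (simp add: field_simps flip: of_nat_mult)
  also have "\<dots> \<le> e * real n"
    using assms(3) by (intro mult_right_mono) auto
  finally show ?thesis .
qed

lemma F_upper_eq_1I:
  assumes "\<And>k N. \<exists>n\<ge>N. \<exists>l. k * l \<le> n \<and>
             (\<forall>i. l \<le> i \<and> i < n \<longrightarrow> d ((f ^^ i) x) ((f ^^ i) y) < t)"
  shows "F_upper d f x y t = 1"
  unfolding F_upper_def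
proof (rule limsup_eq_1I)
  show "real (xi_count d f x y t n) / real n \<le> 1" for n
    using xi_count_le[of d f x y t n] by (cases "n = 0") auto
  fix e :: real assume "e > 0"
  then obtain k :: nat where k: "0 < k" "inverse (real k) < e"
    using ex_inverse_of_nat_less by blast
  show "\<exists>\<^sub>F n in sequentially. 1 - e \<le> real (xi_count d f x y t n) / real n"
    unfolding frequently_sequentially
  proof
    fix N
    obtain n l where "Suc N \<le> n" "k * l \<le> n"
      and close: "\<forall>i. l \<le> i \<and> i < n \<longrightarrow> d ((f ^^ i) x) ((f ^^ i) y) < t"
      using assms by blast
    have "n - l \<le> xi_count d f x y t n"
      unfolding xi_count_def using close by (intro card_mono[of _ "{l..<n}", simplified]) auto
    moreover have "real l \<le> e * real n"
      using window_head_le[OF \<open>k * l \<le> n\<close> k] .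
    ultimately show "\<exists>n\<ge>N. 1 - e \<le> real (xi_count d f x y t n) / real n"
      using \<open>Suc N \<le> n\<close> by (intro exI[of _ n]) (auto simp: field_simps)
  qed
qed

lemma F_lower_eq_0I:
  assumes "\<And>k N. \<exists>n\<ge>N. \<exists>l. k * l \<le> n \<and>
             (\<forall>i. l \<le> i \<and> i < n \<longrightarrow> \<not> d ((f ^^ i) x) ((f ^^ i) y) < t)"
  shows "F_lower d f x y t = 0"
  unfolding F_lower_def
proof (rule liminf_eq_0I)
  fix e :: real assume "e > 0"
  then obtain k :: nat where k: "0 < k" "inverse (real k) < e"
    using ex_inverse_of_nat_less by blast
  show "\<exists>\<^sub>F n in sequentially. real (xi_count d f x y t n) / real n \<le> e"
    unfolding frequently_sequentially
  proof
    fix N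
    obtain n l where "Suc N \<le> n" "k * l \<le> n"
      and far: "\<forall>i. l \<le> i \<and> i < n \<longrightarrow> \<not> d ((f ^^ i) x) ((f ^^ i) y) < t"
      using assms by blast
    have "xi_count d f x y t n \<le> l"
      unfolding xi_count_def using far
      by (intro card_mono[of "{..<l}", simplified]) (auto simp: not_le[symmetric])
    moreover have "real l \<le> e * real n"
      using window_head_le[OF \<open>k * l \<le> n\<close> k] .
    ultimately show "\<exists>n\<ge>N. real (xi_count d f x y t n) / real n \<le> e"
      using \<open>Suc N \<le> n\<close> by (intro exI[of _ n]) (auto simp: field_simps)
  qed
qed simp

lemma uncountable_UNIV_nat_bool: "uncountable (UNIV :: (nat \<Rightarrow> bool) set)"
proof
  assume "countable (UNIV :: (nat \<Rightarrow> bool) set)"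
  then have "range (from_nat_into UNIV) = (UNIV :: (nat \<Rightarrow> bool) set)"
    by simp
  then obtain n where "from_nat_into UNIV n = (\<lambda>k. \<not> from_nat_into UNIV k k)"
    by (metis UNIV_I rangeE)
  from fun_cong[OF this, of n] show False
    by simp
qed

definition with_prefix :: "'a list \<Rightarrow> ('g::countable \<Rightarrow> 'a) \<Rightarrow> 'g \<Rightarrow> 'a" where
  "with_prefix p f \<gamma> = (if to_nat \<gamma> < length p then p ! to_nat \<gamma> else f \<gamma>)"

definition level :: "nat \<Rightarrow> 'g::countable set" where
  "level m = {\<gamma>. to_nat \<gamma> < m}"

lemma level_mono: "m \<le> m' \<Longrightarrow> level m \<subseteq> level m'"
  by (auto simp: level_def)

lemma finite_level: "finite (level m)"
  unfolding level_def using finite_vimageI[of "{..<m}" to_nat] by (simp add: vimage_def)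

lemma finite_subset_level:
  assumes "finite S"
  obtains N where "S \<subseteq> level N"
proof -
  obtain N where "to_nat ` S \<subseteq> {..<N}"
    using assms finite_nat_bounded by blast
  with that show thesis
    by (auto simp: level_def)
qed

lemma with_prefix_from_nat:
  "\<gamma> \<in> level N \<Longrightarrow> with_prefix (map (\<lambda>j. c (from_nat j)) [0..<N]) f \<gamma> = c \<gamma>"
  by (simp add: with_prefix_def level_def)

text \<open>
  Odd block \<open>2 k + 1\<close> reads the bit \<open>fst (prod_decode k)\<close> of \<open>\<beta>\<close>, so every bit is read in
  infinitely many blocks; even blocks read nothing.
\<close>

definition block_bit :: "(nat \<Rightarrow> bool) \<Rightarrow> nat \<Rightarrow> bool" where
  "block_bit \<beta> m \<longleftrightarrow> odd m \<and> \<beta> (fst (prod_decode (m div 2)))"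

lemma block_bit_even: "even m \<Longrightarrow> \<not> block_bit \<beta> m"
  by (simp add: block_bit_def)

lemma block_bit_differ:
  assumes "\<beta> \<noteq> \<beta>'"
  shows "\<exists>m\<ge>N. block_bit \<beta> m \<noteq> block_bit \<beta>' m"
proof -
  obtain j where "\<beta> j \<noteq> \<beta>' j"
    using assms by blast
  moreover have "N \<le> 2 * prod_encode (j, N) + 1"
    using le_prod_encode_2[of N j] by simp
  ultimately show ?thesis
    by (intro exI[of _ "2 * prod_encode (j, N) + 1"]) (simp add: block_bit_def)
qed

text \<open>
  The prefix is encoded as well, so that parameters differing only in their prefix still
  give points that differ on a whole window.
\<close>

definition pair_code :: "'a::countable list \<Rightarrow> (nat \<Rightarrow> bool) \<Rightarrow> nat \<Rightarrow> bool" where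
  "pair_code q \<omega> n = (if even n then \<omega> (n div 2) else n div 2 = to_nat q)"

lemma inj_pair_code: "inj (case_prod pair_code)"
proof (rule injI, clarify)
  fix q q' :: "'a list" and \<omega> \<omega>' assume eq: "pair_code q \<omega> = pair_code q' \<omega>'"
  have "\<omega> k = \<omega>' k" for k
    using fun_cong[OF eq, of "2 * k"] by (simp add: pair_code_def)
  moreover have "to_nat q = to_nat q'"
    using fun_cong[OF eq, of "2 * to_nat q + 1"] by (simp add: pair_code_def)
  ultimately show "q = q' \<and> \<omega> = \<omega>'"
    by auto
qed

section \<open>Sufficiency: the construction\<close>

locale aperiodic_injection =
  fixes \<phi> :: "'g::countable \<Rightarrow> 'g" and a b :: "'a::countable"
  assumes inj: "inj \<phi>" and aperiodic: "\<not> has_periodic_point \<phi>" and a_ne_b: "a \<noteq> b"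
begin

lemma inj_orbit: "inj (\<lambda>k. (\<phi> ^^ k) \<gamma>)"
proof (rule linorder_injI)
  fix k k' :: nat assume "k < k'"
  then have "(\<phi> ^^ k') \<gamma> = (\<phi> ^^ (k' - k)) ((\<phi> ^^ k) \<gamma>)"
    by (simp add: funpow_funpow_apply)
  then show "(\<phi> ^^ k) \<gamma> \<noteq> (\<phi> ^^ k') \<gamma>"
    using aperiodic \<open>k < k'\<close> unfolding has_periodic_point_def by (metis zero_less_diff)
qed

lemma funpow_separation:
  assumes "finite S"
  shows "\<exists>D. \<forall>\<delta>\<in>S. \<forall>\<delta>'\<in>S. \<forall>i i'. i + D < i' \<longrightarrow> (\<phi> ^^ i) \<delta> \<noteq> (\<phi> ^^ i') \<delta>'"
proof -
  define R where "R = (\<Union>\<delta>\<in>S. \<Union>\<delta>'\<in>S. (\<lambda>k. (\<phi> ^^ k) \<delta>') -` {\<delta>})"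
  have "finite R"
    unfolding R_def using assms inj_orbit by (auto intro: finite_vimageI)
  then obtain D where D: "R \<subseteq> {..<D}"
    using finite_nat_bounded by blast
  have "(\<phi> ^^ i) \<delta> \<noteq> (\<phi> ^^ i') \<delta>'" if "\<delta> \<in> S" "\<delta>' \<in> S" "i + D < i'" for \<delta> \<delta>' i i'
  proof
    assume "(\<phi> ^^ i) \<delta> = (\<phi> ^^ i') \<delta>'"
    also have "(\<phi> ^^ i') \<delta>' = (\<phi> ^^ i) ((\<phi> ^^ (i' - i)) \<delta>')"
      using \<open>i + D < i'\<close> by (simp add: funpow_funpow_apply)
    finally have "(\<phi> ^^ (i' - i)) \<delta>' = \<delta>"
      using inj_fn[OF inj] by (simp add: inj_eq)
    then have "i' - i \<in> R"
      using that by (auto simp: R_def)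
    with D \<open>i + D < i'\<close> show False
      by auto
  qed
  then show ?thesis
    by blast
qed

definition separation :: "nat \<Rightarrow> nat" where
  "separation m = (SOME D. \<forall>\<delta>\<in>level m. \<forall>\<delta>'\<in>level m. \<forall>i i'.
                       i + D < i' \<longrightarrow> (\<phi> ^^ i) \<delta> \<noteq> (\<phi> ^^ i') \<delta>')"

lemma funpow_level_separated:
  assumes "\<delta> \<in> level m" "\<delta>' \<in> level m" "i + separation m < i'"
  shows "(\<phi> ^^ i) \<delta> \<noteq> (\<phi> ^^ i') \<delta>'"
proof -
  have "\<forall>\<delta>\<in>level m. \<forall>\<delta>'\<in>level m. \<forall>i i'. i + separation m < i' \<longrightarrow> (\<phi> ^^ i) \<delta> \<noteq> (\<phi> ^^ i') \<delta>'"
    unfolding separation_def by (rule someI_ex) (rule funpow_separation[OF finite_level])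
  with assms show ?thesis
    by blast
qed

definition gap :: "nat \<Rightarrow> nat" where
  "gap m = Suc (separation m)"

text \<open>
  Block m is the time interval \<open>[block_start m, block_start (Suc m))\<close>. At \<open>pattern_time m\<close>
  the orbit of \<open>level m\<close> displays a pattern, and on the window
  \<open>[window_start m, block_start (Suc m))\<close>, which fills all but a fraction \<open>1/(m + 2)\<close> of
  the block, it displays a constant symbol. Gaps longer than \<open>separation m\<close> keep these
  coordinates apart from each other, from \<open>level m\<close> and from the other blocks.
\<close>

primrec block_start :: "nat \<Rightarrow> nat" where
  "block_start 0 = 0"
| "block_start (Suc m) = (m + 2) * (block_start m + 2 * gap m)"

definition pattern_time :: "nat \<Rightarrow> nat" where
  "pattern_time m = block_start m + gap m"

definition window_start :: "nat \<Rightarrow> nat" where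
  "window_start m = block_start m + 2 * gap m"

lemma block_start_Suc_eq: "block_start (Suc m) = (m + 2) * window_start m"
  by (simp add: window_start_def)

lemma pattern_time_le_window_start: "pattern_time m \<le> window_start m"
  by (simp add: pattern_time_def window_start_def)

lemma window_start_less: "window_start m < block_start (Suc m)"
  by (simp add: window_start_def gap_def)

lemma block_start_Suc_ge: "m + 2 \<le> block_start (Suc m)"
  by (simp add: gap_def)

lemma incseq_block_start: "incseq block_start"
  by (rule incseq_SucI) (simp add: add_mult_distrib)

lemma block_start_Suc_le:
  assumes "m < m'"
  shows "block_start (Suc m) \<le> block_start m'"
  by (rule incseqD[OF incseq_block_start Suc_leI[OF assms]])

lemma funpow_blocks_disjoint:
  assumes "\<delta> \<in> level m" "pattern_time m \<le> i" "i < block_start (Suc m)"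
    and "\<delta>' \<in> level m'" "pattern_time m' \<le> i'" "i' < block_start (Suc m')"
    and "(\<phi> ^^ i) \<delta> = (\<phi> ^^ i') \<delta>'"
  shows "m = m'"
proof -
  have no_collision: False
    if "k < k'" "\<epsilon> \<in> level k" "j < block_start (Suc k)"
      "\<epsilon>' \<in> level k'" "pattern_time k' \<le> j'" "(\<phi> ^^ j) \<epsilon> = (\<phi> ^^ j') \<epsilon>'"
    for k k' j j' \<epsilon> \<epsilon>'
  proof -
    have "j + separation k' < j'"
      using that(3,5) block_start_Suc_le[OF \<open>k < k'\<close>]
      unfolding pattern_time_def gap_def by linarith
    moreover have "\<epsilon> \<in> level k'"
      using that(1,2) level_mono[of k k'] by auto
    ultimately show False
      using funpow_level_separated that(4,6) by simp
  qed
  show ?thesis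
  proof (rule linorder_cases[of m m'])
    assume "m < m'"
    from no_collision[OF this assms(1,3,4,5,7)] show ?thesis ..
  next
    assume "m' < m"
    from no_collision[OF this assms(4,6,1,2) assms(7)[symmetric]] show ?thesis ..
  qed
qed

lemma funpow_block_notin_level:
  assumes "\<delta> \<in> level m" "pattern_time m \<le> i"
  shows "(\<phi> ^^ i) \<delta> \<notin> level m"
  using funpow_level_separated[of "(\<phi> ^^ i) \<delta>" m \<delta> 0 i] assms
  by (auto simp: pattern_time_def gap_def)

lemma funpow_pattern_time_ne_window:
  assumes "\<delta> \<in> level m" "\<delta>' \<in> level m" "window_start m \<le> i"
  shows "(\<phi> ^^ pattern_time m) \<delta> \<noteq> (\<phi> ^^ i) \<delta>'"
proof (rule funpow_level_separated[OF assms(1,2)])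
  show "pattern_time m + separation m < i"
    using assms(3) by (simp add: pattern_time_def window_start_def gap_def)
qed

definition pattern :: "nat \<Rightarrow> 'g \<Rightarrow> 'a" where
  "pattern m = with_prefix (from_nat (fst (prod_decode m))) (\<lambda>_. a)"

lemma pattern_recurs: "\<exists>m\<ge>N. pattern m = with_prefix p (\<lambda>_. a)"
  using le_prod_encode_2[of N "to_nat p"]
  by (intro exI[of _ "prod_encode (to_nat p, N)"]) (simp add: pattern_def)

definition block_symbol :: "(nat \<Rightarrow> bool) \<Rightarrow> nat \<Rightarrow> 'a" where
  "block_symbol \<beta> m = (if block_bit \<beta> m then b else a)"

text \<open>
  The coordinates \<open>(\<phi> ^^ i) \<delta>\<close> with \<open>\<delta> \<in> level m\<close> and i in the second half of block m are
  distinct for distinct m (\<open>funpow_blocks_disjoint\<close>), so the following prescription is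
  consistent: pattern m at \<open>pattern_time m\<close>, the block symbol on the window, a elsewhere.
\<close>

definition base_point :: "(nat \<Rightarrow> bool) \<Rightarrow> 'g \<Rightarrow> 'a" where
  "base_point \<beta> \<gamma> =
     (if \<exists>m. \<gamma> \<in> (\<phi> ^^ pattern_time m) ` level m
      then let m = THE m. \<gamma> \<in> (\<phi> ^^ pattern_time m) ` level m
           in pattern m (inv (\<phi> ^^ pattern_time m) \<gamma>)
      else if \<exists>m i. block_bit \<beta> m \<and> window_start m \<le> i \<and> i < block_start (Suc m)
                     \<and> \<gamma> \<in> (\<phi> ^^ i) ` level m
      then b else a)"

lemma pattern_time_in_block: "pattern_time m < block_start (Suc m)"
  using pattern_time_le_window_start window_start_less le_less_trans by blast

lemma base_point_at_pattern_time:
  assumes "\<delta> \<in> level m"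
  shows "base_point \<beta> ((\<phi> ^^ pattern_time m) \<delta>) = pattern m \<delta>"
proof -
  let ?\<gamma> = "(\<phi> ^^ pattern_time m) \<delta>"
  have "(THE m'. ?\<gamma> \<in> (\<phi> ^^ pattern_time m') ` level m') = m"
  proof (rule the_equality)
    show "?\<gamma> \<in> (\<phi> ^^ pattern_time m) ` level m"
      using assms by blast
    show "m' = m" if "?\<gamma> \<in> (\<phi> ^^ pattern_time m') ` level m'" for m'
      using that funpow_blocks_disjoint[OF assms order.refl pattern_time_in_block]
        pattern_time_in_block by fastforce
  qed
  moreover have "inv (\<phi> ^^ pattern_time m) ?\<gamma> = \<delta>"
    using inj_fn[OF inj] by simp
  ultimately show ?thesis
    using assms by (auto simp: base_point_def)
qed

lemma base_point_in_window:
  assumes "\<delta> \<in> level m" "window_start m \<le> i" "i < block_start (Suc m)"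
  shows "base_point \<beta> ((\<phi> ^^ i) \<delta>) = block_symbol \<beta> m"
proof -
  have i: "pattern_time m \<le> i"
    using assms(2) pattern_time_le_window_start order_trans by blast
  have same_block: "m' = m"
    if "\<delta>' \<in> level m'" "pattern_time m' \<le> i'" "i' < block_start (Suc m')"
       "(\<phi> ^^ i) \<delta> = (\<phi> ^^ i') \<delta>'" for m' i' \<delta>'
    using funpow_blocks_disjoint[OF assms(1) i assms(3) that] by simp
  have "(\<phi> ^^ i) \<delta> \<notin> (\<phi> ^^ pattern_time m') ` level m'" for m'
    using same_block[OF _ order.refl pattern_time_in_block]
      funpow_pattern_time_ne_window[OF _ assms(1,2)] by fastforce
  moreover have "(\<exists>m' i'. block_bit \<beta> m' \<and> window_start m' \<le> i' \<and> i' < block_start (Suc m')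
                   \<and> (\<phi> ^^ i) \<delta> \<in> (\<phi> ^^ i') ` level m') \<longleftrightarrow> block_bit \<beta> m"
  proof
    assume "\<exists>m' i'. block_bit \<beta> m' \<and> window_start m' \<le> i' \<and> i' < block_start (Suc m')
              \<and> (\<phi> ^^ i) \<delta> \<in> (\<phi> ^^ i') ` level m'"
    then obtain m' i' \<delta>' where m': "block_bit \<beta> m'" "window_start m' \<le> i'"
      "i' < block_start (Suc m')" "\<delta>' \<in> level m'" "(\<phi> ^^ i) \<delta> = (\<phi> ^^ i') \<delta>'"
      by blast
    have "m' = m"
      using same_block[OF m'(4) _ m'(3,5)] m'(2) pattern_time_le_window_start[of m'] by simp
    with m'(1) show "block_bit \<beta> m"
      by simp
  next
    assume "block_bit \<beta> m"
    with assms show "\<exists>m' i'. block_bit \<beta> m' \<and> window_start m' \<le> i' \<and> i' < block_start (Suc m')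
                       \<and> (\<phi> ^^ i) \<delta> \<in> (\<phi> ^^ i') ` level m'"
      by blast
  qed
  ultimately show ?thesis
    by (simp add: base_point_def block_symbol_def)
qed

definition chaotic_point :: "'a list \<Rightarrow> (nat \<Rightarrow> bool) \<Rightarrow> 'g \<Rightarrow> 'a" where
  "chaotic_point q \<omega> = with_prefix q (base_point (pair_code q \<omega>))"

lemma chaotic_point_beyond_prefix:
  assumes "length q \<le> m" "\<delta> \<in> level m" "pattern_time m \<le> i"
  shows "chaotic_point q \<omega> ((\<phi> ^^ i) \<delta>) = base_point (pair_code q \<omega>) ((\<phi> ^^ i) \<delta>)"
  using funpow_block_notin_level[OF assms(2,3)] assms(1)
  by (auto simp: chaotic_point_def with_prefix_def level_def)

lemma chaotic_point_at_pattern_time: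
  assumes "length q \<le> m" "\<delta> \<in> level m"
  shows "chaotic_point q \<omega> ((\<phi> ^^ pattern_time m) \<delta>) = pattern m \<delta>"
  using chaotic_point_beyond_prefix[OF assms order.refl] base_point_at_pattern_time[OF assms(2)]
  by simp

lemma chaotic_point_in_window:
  assumes "length q \<le> m" "\<delta> \<in> level m" "window_start m \<le> i" "i < block_start (Suc m)"
  shows "chaotic_point q \<omega> ((\<phi> ^^ i) \<delta>) = block_symbol (pair_code q \<omega>) m"
proof -
  have "pattern_time m \<le> i"
    using assms(3) pattern_time_le_window_start[of m] by linarith
  show ?thesis
    using chaotic_point_beyond_prefix[OF assms(1,2) \<open>pattern_time m \<le> i\<close>]
      base_point_in_window[OF assms(2-4)] by simp
qed

lemma shift_chaotic_point_in_cylinder: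
  assumes "length q \<le> m" "S \<subseteq> level m" "window_start m \<le> i" "i < block_start (Suc m)"
  shows "(sigma_shift \<phi> ^^ i) (chaotic_point q \<omega>) \<in> cylinder S (\<lambda>_. block_symbol (pair_code q \<omega>) m)"
  unfolding cylinder_def funpow_sigma_shift
proof (intro CollectI ballI)
  fix \<gamma> assume "\<gamma> \<in> S"
  with assms(2) have "\<gamma> \<in> level m"
    by blast
  from chaotic_point_in_window[OF assms(1) this assms(3,4)]
  show "chaotic_point q \<omega> ((\<phi> ^^ i) \<gamma>) = block_symbol (pair_code q \<omega>) m" .
qed

lemma dense_range_chaotic_point:
  "prod_discrete closure_of range (case_prod chaotic_point) = topspace prod_discrete"
  unfolding dense_prod_discrete_iff
proof (intro allI impI)
  fix S :: "'g set" and c :: "'g \<Rightarrow> 'a" assume "finite S"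
  then obtain N where "S \<subseteq> level N"
    by (rule finite_subset_level)
  then have "chaotic_point (map (\<lambda>j. c (from_nat j)) [0..<N]) (\<lambda>_. False) \<in> cylinder S c"
    by (auto simp: cylinder_def chaotic_point_def with_prefix_from_nat)
  then show "range (case_prod chaotic_point) \<inter> cylinder S c \<noteq> {}"
    by blast
qed

lemma transitive_point_chaotic_point: "transitive_point prod_discrete (sigma_shift \<phi>) (chaotic_point q \<omega>)"
  unfolding transitive_point_sigma_shift_iff
proof (intro allI impI)
  fix S :: "'g set" and c :: "'g \<Rightarrow> 'a" assume "finite S"
  then obtain N where N: "S \<subseteq> level N"
    by (rule finite_subset_level)
  obtain m where m: "N + length q \<le> m"
    "pattern m = with_prefix (map (\<lambda>j. c (from_nat j)) [0..<N]) (\<lambda>_. a)"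
    using pattern_recurs[of "N + length q" "map (\<lambda>j. c (from_nat j)) [0..<N]"] by blast
  have "chaotic_point q \<omega> ((\<phi> ^^ pattern_time m) \<gamma>) = c \<gamma>" if "\<gamma> \<in> S" for \<gamma>
  proof -
    have "N \<le> m" "length q \<le> m"
      using m(1) by simp_all
    moreover have "\<gamma> \<in> level N"
      using N that by blast
    ultimately have "chaotic_point q \<omega> ((\<phi> ^^ pattern_time m) \<gamma>) = pattern m \<gamma>"
      using level_mono[of N m] by (intro chaotic_point_at_pattern_time) auto
    also have "\<dots> = c \<gamma>"
      using \<open>\<gamma> \<in> level N\<close> by (simp add: m(2) with_prefix_from_nat)
    finally show ?thesis .
  qed
  then show "\<exists>n. \<forall>\<gamma>\<in>S. chaotic_point q \<omega> ((\<phi> ^^ n) \<gamma>) = c \<gamma>"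
    by blast
qed

lemma chaotic_point_eq_imp_pair_code_eq:
  assumes "chaotic_point q \<omega> = chaotic_point q' \<omega>'"
  shows "pair_code q \<omega> = pair_code q' \<omega>'"
proof (rule ccontr)
  define \<gamma> :: 'g where "\<gamma> = undefined"
  assume "pair_code q \<omega> \<noteq> pair_code q' \<omega>'"
  then obtain m where m: "length q + length q' + Suc (to_nat \<gamma>) \<le> m"
    "block_bit (pair_code q \<omega>) m \<noteq> block_bit (pair_code q' \<omega>') m"
    using block_bit_differ[of "pair_code q \<omega>" "pair_code q' \<omega>'" "length q + length q' + Suc (to_nat \<gamma>)"]
    by blast
  have "\<gamma> \<in> level m" "length q \<le> m" "length q' \<le> m"
    using m(1) by (auto simp: level_def)
  have symbol: "chaotic_point p \<rho> ((\<phi> ^^ window_start m) \<gamma>) = block_symbol (pair_code p \<rho>) m"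
    if "length p \<le> m" for p \<rho>
    using chaotic_point_in_window[OF that \<open>\<gamma> \<in> level m\<close> order.refl window_start_less] .
  from assms have "chaotic_point q \<omega> ((\<phi> ^^ window_start m) \<gamma>) = chaotic_point q' \<omega>' ((\<phi> ^^ window_start m) \<gamma>)"
    by simp
  then have "block_symbol (pair_code q \<omega>) m = block_symbol (pair_code q' \<omega>') m"
    using symbol[OF \<open>length q \<le> m\<close>] symbol[OF \<open>length q' \<le> m\<close>] by simp
  then show False
    using m(2) a_ne_b by (simp add: block_symbol_def split: if_splits)
qed

lemma inj_chaotic_point: "inj (case_prod chaotic_point)"
proof (rule injI)
  fix x y :: "'a list \<times> (nat \<Rightarrow> bool)"
  assume eq: "case_prod chaotic_point x = case_prod chaotic_point y"
  obtain q \<omega> q' \<omega>' where xy: "x = (q, \<omega>)" "y = (q', \<omega>')"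
    by (cases x, cases y)
  from eq have "pair_code q \<omega> = pair_code q' \<omega>'"
    unfolding xy by (intro chaotic_point_eq_imp_pair_code_eq) simp
  then show "x = y"
    using injD[OF inj_pair_code, of x y] by (simp add: xy)
qed

lemma uncountable_range_chaotic_point: "uncountable (range (case_prod chaotic_point))"
proof
  assume "countable (range (case_prod chaotic_point))"
  then have "countable (UNIV :: ('a list \<times> (nat \<Rightarrow> bool)) set)"
    using inj_chaotic_point by (rule countable_image_inj_on)
  then have "countable (range (snd :: 'a list \<times> (nat \<Rightarrow> bool) \<Rightarrow> _))"
    by (rule countable_image)
  moreover have "range (snd :: 'a list \<times> (nat \<Rightarrow> bool) \<Rightarrow> _) = UNIV"
    by (rule surjI[of _ "Pair []"]) simp
  ultimately show False
    using uncountable_UNIV_nat_bool by simp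
qed

lemma dist_const_pos:
  assumes "Metric_space UNIV d"
  shows "0 < d (\<lambda>_::'g. a) (\<lambda>_. b)"
proof -
  interpret Metric_space UNIV d by fact
  have "(\<lambda>_::'g. a) \<noteq> (\<lambda>_. b)"
    using a_ne_b by (simp add: fun_eq_iff)
  then show ?thesis
    using nonneg[of "\<lambda>_. a" "\<lambda>_. b"] zero[of "\<lambda>_. a" "\<lambda>_. b"] by (simp add: less_le)
qed

lemma shift_chaotic_point_near_block_symbol:
  assumes "Metric_space UNIV d" "Metric_space.mtopology UNIV d = prod_discrete" "e > 0"
  obtains N where "\<And>q \<omega> m i. length q \<le> m \<Longrightarrow> N \<le> m \<Longrightarrow> window_start m \<le> i \<Longrightarrow>
     i < block_start (Suc m) \<Longrightarrow>
     d (\<lambda>_. block_symbol (pair_code q \<omega>) m) ((sigma_shift \<phi> ^^ i) (chaotic_point q \<omega>)) < e"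
proof -
  obtain Sa where "finite Sa" and Sa: "\<And>z. z \<in> cylinder Sa (\<lambda>_. a) \<Longrightarrow> d (\<lambda>_. a) z < e"
    using cylinder_subset_mball[OF assms, where c = "\<lambda>_. a"] by blast
  obtain Sb where "finite Sb" and Sb: "\<And>z. z \<in> cylinder Sb (\<lambda>_. b) \<Longrightarrow> d (\<lambda>_. b) z < e"
    using cylinder_subset_mball[OF assms, where c = "\<lambda>_. b"] by blast
  from \<open>finite Sa\<close> \<open>finite Sb\<close> have "finite (Sa \<union> Sb)"
    by simp
  then obtain N where N: "Sa \<union> Sb \<subseteq> level N"
    by (rule finite_subset_level)
  show thesis
  proof (rule that)
    fix q :: "'a list" and \<omega> m i
    assume q: "length q \<le> m" and "N \<le> m" and i: "window_start m \<le> i" "i < block_start (Suc m)"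
    then have "Sa \<subseteq> level m" "Sb \<subseteq> level m"
      using N level_mono[OF \<open>N \<le> m\<close>] by auto
    then show "d (\<lambda>_. block_symbol (pair_code q \<omega>) m) ((sigma_shift \<phi> ^^ i) (chaotic_point q \<omega>)) < e"
      using Sa Sb shift_chaotic_point_in_cylinder[OF q _ i, of _ \<omega>]
      by (cases "block_bit (pair_code q \<omega>) m") (auto simp: block_symbol_def)
  qed
qed

lemma window_start_scaled_le:
  assumes "k \<le> m + 2"
  shows "k * window_start m \<le> block_start (Suc m)"
  unfolding block_start_Suc_eq using assms by (rule mult_le_mono1)

lemma F_upper_chaotic_point:
  assumes "Metric_space UNIV d" "Metric_space.mtopology UNIV d = prod_discrete" "s > 0"
  shows "F_upper d (sigma_shift \<phi>) (chaotic_point q \<omega>) (chaotic_point q' \<omega>') s = 1"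
proof (rule F_upper_eq_1I)
  interpret Metric_space UNIV d by fact
  have "s / 2 > 0"
    using \<open>s > 0\<close> by simp
  then obtain N where near: "\<And>q \<omega> m i. length q \<le> m \<Longrightarrow> N \<le> m \<Longrightarrow> window_start m \<le> i \<Longrightarrow>
      i < block_start (Suc m) \<Longrightarrow>
      d (\<lambda>_. block_symbol (pair_code q \<omega>) m) ((sigma_shift \<phi> ^^ i) (chaotic_point q \<omega>)) < s / 2"
    using shift_chaotic_point_near_block_symbol[OF assms(1,2)] by blast
  fix k N'
  define m where "m = 2 * (k + N' + N + length q + length q')"
  have m: "N \<le> m" "length q \<le> m" "length q' \<le> m" "k \<le> m + 2" "N' \<le> m + 2"
    by (simp_all add: m_def)
  have symbol: "block_symbol \<beta> m = a" for \<beta>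
    by (simp add: block_symbol_def block_bit_even m_def)
  have "d ((sigma_shift \<phi> ^^ i) (chaotic_point q \<omega>)) ((sigma_shift \<phi> ^^ i) (chaotic_point q' \<omega>')) < s"
    if "window_start m \<le> i" "i < block_start (Suc m)" for i
  proof -
    have "d (\<lambda>_. a) ((sigma_shift \<phi> ^^ i) (chaotic_point q \<omega>)) < s / 2"
      using near[OF m(2,1) that] by (simp add: symbol)
    moreover have "d (\<lambda>_. a) ((sigma_shift \<phi> ^^ i) (chaotic_point q' \<omega>')) < s / 2"
      using near[OF m(3,1) that] by (simp add: symbol)
    ultimately show ?thesis
      using mdist_lt_via_centre[OF UNIV_I UNIV_I UNIV_I] by fastforce
  qed
  moreover have "N' \<le> block_start (Suc m)"
    using block_start_Suc_ge[of m] m(5) by linarith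
  ultimately show "\<exists>n\<ge>N'. \<exists>l. k * l \<le> n \<and> (\<forall>i. l \<le> i \<and> i < n \<longrightarrow>
      d ((sigma_shift \<phi> ^^ i) (chaotic_point q \<omega>)) ((sigma_shift \<phi> ^^ i) (chaotic_point q' \<omega>')) < s)"
    using window_start_scaled_le[OF m(4)] by blast
qed

lemma F_lower_chaotic_point:
  assumes "Metric_space UNIV d" "Metric_space.mtopology UNIV d = prod_discrete"
    and "(q, \<omega>) \<noteq> (q', \<omega>')"
  shows "F_lower d (sigma_shift \<phi>) (chaotic_point q \<omega>) (chaotic_point q' \<omega>') (d (\<lambda>_. a) (\<lambda>_. b) / 3) = 0"
proof (rule F_lower_eq_0I)
  interpret Metric_space UNIV d by fact
  let ?e = "d (\<lambda>_::'g. a) (\<lambda>_. b) / 3"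
  have "?e > 0"
    using dist_const_pos[OF assms(1)] by simp
  then obtain N where near: "\<And>q \<omega> m i. length q \<le> m \<Longrightarrow> N \<le> m \<Longrightarrow> window_start m \<le> i \<Longrightarrow>
      i < block_start (Suc m) \<Longrightarrow>
      d (\<lambda>_. block_symbol (pair_code q \<omega>) m) ((sigma_shift \<phi> ^^ i) (chaotic_point q \<omega>)) < ?e"
    using shift_chaotic_point_near_block_symbol[OF assms(1,2)] by blast
  have "pair_code q \<omega> \<noteq> pair_code q' \<omega>'"
    using injD[OF inj_pair_code, of "(q, \<omega>)" "(q', \<omega>')"] assms(3) by auto
  fix k N'
  obtain m where "k + N' + N + length q + length q' \<le> m"
    and bits: "block_bit (pair_code q \<omega>) m \<noteq> block_bit (pair_code q' \<omega>') m"
    using block_bit_differ[OF \<open>pair_code q \<omega> \<noteq> pair_code q' \<omega>'\<close>] by blast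
  then have m: "N \<le> m" "length q \<le> m" "length q' \<le> m" "k \<le> m + 2" "N' \<le> m + 2"
    by simp_all
  have symbols_far: "3 * ?e \<le> d (\<lambda>_::'g. block_symbol (pair_code q \<omega>) m) (\<lambda>_. block_symbol (pair_code q' \<omega>') m)"
    using bits commute[of "\<lambda>_. a" "\<lambda>_. b"]
    by (cases "block_bit (pair_code q \<omega>) m") (simp_all add: block_symbol_def)
  have "\<not> d ((sigma_shift \<phi> ^^ i) (chaotic_point q \<omega>)) ((sigma_shift \<phi> ^^ i) (chaotic_point q' \<omega>')) < ?e"
    if "window_start m \<le> i" "i < block_start (Suc m)" for i
    using not_close_near_far_centres[OF UNIV_I UNIV_I UNIV_I UNIV_I
        near[OF m(2,1) that] near[OF m(3,1) that] symbols_far] .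
  moreover have "N' \<le> block_start (Suc m)"
    using block_start_Suc_ge[of m] m(5) by linarith
  ultimately show "\<exists>n\<ge>N'. \<exists>l. k * l \<le> n \<and> (\<forall>i. l \<le> i \<and> i < n \<longrightarrow>
      \<not> d ((sigma_shift \<phi> ^^ i) (chaotic_point q \<omega>)) ((sigma_shift \<phi> ^^ i) (chaotic_point q' \<omega>')) < ?e)"
    using window_start_scaled_le[OF m(4)] by blast
qed

theorem transitive_distributional_chaotic_sigma_shift:
  fixes d :: "('g \<Rightarrow> 'a) \<Rightarrow> ('g \<Rightarrow> 'a) \<Rightarrow> real"
  assumes "Metric_space UNIV d" "Metric_space.mtopology UNIV d = prod_discrete"
  shows "transitive_distributional_chaotic prod_discrete d (sigma_shift \<phi>)"
proof -
  let ?A = "range (case_prod chaotic_point)" and ?e = "d (\<lambda>_::'g. a) (\<lambda>_. b) / 3"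
  have scrambled: "(\<forall>s>0. F_upper d (sigma_shift \<phi>) x y s = 1) \<and> F_lower d (sigma_shift \<phi>) x y ?e = 0"
    if members: "x \<in> ?A" "y \<in> ?A" and "x \<noteq> y" for x y
  proof -
    obtain q \<omega> q' \<omega>' where xy: "x = chaotic_point q \<omega>" "y = chaotic_point q' \<omega>'"
      using members by auto
    with \<open>x \<noteq> y\<close> have "(q, \<omega>) \<noteq> (q', \<omega>')"
      by auto
    then show ?thesis
      unfolding xy using F_upper_chaotic_point[OF assms] F_lower_chaotic_point[OF assms] by simp
  qed
  show ?thesis
    unfolding transitive_distributional_chaotic_def
  proof (intro exI[of _ ?A] exI[of _ ?e] conjI)
    show "?A \<subseteq> topspace prod_discrete"
      by simp
    show "prod_discrete closure_of ?A = topspace prod_discrete"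
      by (rule dense_range_chaotic_point)
    show "uncountable ?A"
      by (rule uncountable_range_chaotic_point)
    show "\<forall>x\<in>?A. transitive_point prod_discrete (sigma_shift \<phi>) x"
      using transitive_point_chaotic_point by auto
    show "?e > 0"
      using dist_const_pos[OF assms(1)] by simp
    show "\<forall>x\<in>?A. \<forall>y\<in>?A. x \<noteq> y \<longrightarrow>
        (\<forall>s>0. F_upper d (sigma_shift \<phi>) x y s = 1) \<and> F_lower d (sigma_shift \<phi>) x y ?e = 0"
      by (intro ballI impI scrambled)
  qed
qed

end

lemma ex_neq_if_CARD_ge_2:
  assumes "2 \<le> CARD('a::finite)"
  shows "\<exists>a b :: 'a. a \<noteq> b"
proof (rule ccontr)
  assume "\<not> (\<exists>a b :: 'a. a \<noteq> b)"
  then have "(UNIV :: 'a set) = {undefined}"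
    by auto
  then have "CARD('a) = card {undefined :: 'a}"
    by (rule arg_cong)
  with assms show False
    by simp
qed

theorem theorem5p4:
  fixes \<phi> :: "'g::countable \<Rightarrow> 'g"
    and d :: "('g \<Rightarrow> 'a::finite) \<Rightarrow> ('g \<Rightarrow> 'a) \<Rightarrow> real"
  assumes "CARD('a) \<ge> 2"
    and "Metric_space UNIV d"
    and "Metric_space.mtopology UNIV d = prod_discrete"
  shows "transitive_distributional_chaotic prod_discrete d (sigma_shift \<phi>)
           \<longleftrightarrow> inj \<phi> \<and> \<not> has_periodic_point \<phi>"
proof -
  obtain a b :: 'a where "a \<noteq> b"
    using ex_neq_if_CARD_ge_2[OF assms(1)] by blast
  show ?thesis
  proof
    assume "transitive_distributional_chaotic prod_discrete d (sigma_shift \<phi>)"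
    then obtain x :: "'g \<Rightarrow> 'a" where x: "transitive_point prod_discrete (sigma_shift \<phi>) x"
      using transitive_distributional_chaotic_imp_transitive_point by blast
    show "inj \<phi> \<and> \<not> has_periodic_point \<phi>"
      using transitive_point_sigma_shift_imp_inj[OF x \<open>a \<noteq> b\<close>]
        transitive_point_sigma_shift_imp_aperiodic[OF x \<open>a \<noteq> b\<close>] by simp
  next
    assume "inj \<phi> \<and> \<not> has_periodic_point \<phi>"
    then interpret aperiodic_injection \<phi> a b
      using \<open>a \<noteq> b\<close> by unfold_locales auto
    show "transitive_distributional_chaotic prod_discrete d (sigma_shift \<phi>)"
      by (rule transitive_distributional_chaotic_sigma_shift[OF assms(2,3)])
  qed
qed

end
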